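(* In the setting below, fix $k$, parameters $\rho^k>0$, $\beta^k>0$, a point $(y^k,v^k)\in\Upsilon_\tau\times\mathcal V$, and an initial point $y^{k,0}\in\Upsilon_\tau$, and run Algorithm AMA. Suppose it does not terminate, i.e. it generates an infinite sequence $\{(y^{k,j},v^{k,j})\}_{j\ge1}$. Then: (i) the sequence $\{\Psi^k(y^{k,j},v^{k,j})\}_{j\ge1}$ is strictly decreasing and converges to a finite limit; (ii) the sequence $\{(y^{k,j},v^{k,j})\}_{j\ge1}$ has at least one accumulation point; (iii) every accumulation point of $\{(y^{k,j},v^{k,j})\}_{j\ge1}$ is a partially optimal solution of the problem $\min\{\Psi^k(y,v): y\in\Upsilon_\tau,\ v\in\mathcal V\}$.
   Context: Setting. $\mathcal A$ is a finite set of links; $\mathcal V=\{\Delta h: h\ge0,\ \Lambda h=d\}\subset\mathbb R^{|\mathcal A|}$ is the set of feasible link flows, where $\Delta$ is a 0/1 link–route incidence matrix, $\Lambda$ a 0/1 OD–route incidence matrix in which every route belongs to exactly one OD pair and every OD pair has at least one route, and $d>0$ a demand vector (so $\mathcal V$ is a nonempty compact convex polytope in $\mathbb R^{|\mathcal A|}_{\ge0}$). Let $u_a\ge0$, $\mathcal Y=\{y: 0\le y_a\le u_a\ \forall a\}$, $1\le\tau\le|\mathcal A|$ an integer, $\Upsilon_\tau=\{y\in\mathcal Y: |\{a: y_a>0\}|\le\tau\}$. Standing assumptions: for each $a$, the link travel time $t_a(y_a,v_a)$ is continuously differentiable and strictly increasing in $v_a$ for $y_a\ge0$; the expansion cost $G_a(y_a)$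 is nonnegative, continuously differentiable, strictly increasing and convex; $\int_0^{v_a}t_a(y_a,w)\,dw$ and $t_a(y_a,v_a)v_a$ are convex in $(y_a,v_a)$. With $\eta>0$ set $F(y,v)=\sum_a t_a(y_a,v_a)v_a+\eta\sum_a G_a(y_a)$, $f(y,v)=\sum_a\int_0^{v_a}t_a(y_a,w)\,dw$, $g(y)=\min_{v\in\mathcal V}f(y,v)$. Under these assumptions $g$ is convex and continuously differentiable on $\mathcal Y$ (a known fact). Define $\Phi(y,v;\bar y,\bar v)=f(y,v)-g(\bar y)-\nabla g(\bar y)^{\mathsf T}(y-\bar y)$ and $$\Psi^k(y,v)=F(y,v)+\rho^k\,\Phi(y,v;y^k,v^k)+\rho^k\beta^k\|(y-y^k,v-v^k)\|_2^2.$$ Algorithm AMA: for $j=0,1,\dots$: (1) let $v^{k,j+1}$ be the (unique) minimizer of $\Psi^k(y^{k,j},\cdot)$ over $\mathcal V$; (2) let $y^{k,j+1}$ be a minimizer of $\Psi^k(\cdot,v^{k,j+1})$ over $\Upsilon_\tau$; (3) if $(y^{k,j+1},v^{k,j+1})$ is partially optimal, stop and return it. A point $(\bar y,\bar v)\in\Upsilon_\tau\times\mathcal V$ is partially optimal if $\Psi^k(\bar y,\bar v)\le\Psi^k(\bar y,v)$ for all $v\in\mathcal V$ and $\Psi^k(\bar y,\bar v)\le\Psi^k(y,\bar v)$ for all $y\in\Upsilon_\tau$. *)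

theory Defs
  imports "HOL-Analysis.Analysis"
begin

text \<open>Links are indexed by a finite type 'a, routes by a finite type 'r,
  OD pairs by a finite type 'w.
  Delta a r: link a lies on route r (0/1 link-route incidence matrix).
  Lambda w r: route r belongs to OD pair w (0/1 OD-route incidence matrix).\<close>

definition feasible_flows ::
  "('a::finite \<Rightarrow> 'r::finite \<Rightarrow> bool) \<Rightarrow> ('w::finite \<Rightarrow> 'r \<Rightarrow> bool) \<Rightarrow> ('w \<Rightarrow> real) \<Rightarrow> (real^'a) set" where
  "feasible_flows Delta Lambda d =
     {v. \<exists>h::'r \<Rightarrow> real. (\<forall>r. 0 \<le> h r) \<and> (\<forall>w. (\<Sum>r | Lambda w r. h r) = d w)
            \<and> v = (\<chi> a. \<Sum>r | Delta a r. h r)}"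

definition Ybox :: "('a::finite \<Rightarrow> real) \<Rightarrow> (real^'a) set" where
  "Ybox u = {y. \<forall>a. 0 \<le> y $ a \<and> y $ a \<le> u a}"

definition Upsilon :: "('a::finite \<Rightarrow> real) \<Rightarrow> nat \<Rightarrow> (real^'a) set" where
  "Upsilon u \<tau> = {y \<in> Ybox u. card {a. y $ a > 0} \<le> \<tau>}"

definition Fobj :: "('a::finite \<Rightarrow> real \<Rightarrow> real \<Rightarrow> real) \<Rightarrow> ('a \<Rightarrow> real \<Rightarrow> real) \<Rightarrow> real
                    \<Rightarrow> real^'a \<Rightarrow> real^'a \<Rightarrow> real" where
  "Fobj t G \<eta> y v = (\<Sum>a\<in>UNIV. t a (y $ a) (v $ a) * v $ a) + \<eta> * (\<Sum>a\<in>UNIV. G a (y $ a))"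

definition fobj :: "('a::finite \<Rightarrow> real \<Rightarrow> real \<Rightarrow> real) \<Rightarrow> real^'a \<Rightarrow> real^'a \<Rightarrow> real" where
  "fobj t y v = (\<Sum>a\<in>UNIV. integral {0 .. v $ a} (\<lambda>w. t a (y $ a) w))"

text \<open>g(y) = min over V of f(y,v) (the minimum exists; written as an infimum).\<close>
definition gval :: "('a::finite \<Rightarrow> real \<Rightarrow> real \<Rightarrow> real) \<Rightarrow> (real^'a) set \<Rightarrow> real^'a \<Rightarrow> real" where
  "gval t V y = (INF v\<in>V. fobj t y v)"

text \<open>Gradient of a function at x relative to the set S (g is C^1 on the box Y).\<close>
definition grad_within :: "(real^'a::finite \<Rightarrow> real) \<Rightarrow> (real^'a) set \<Rightarrow> real^'a \<Rightarrow> real^'a" where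
  "grad_within h S x = (SOME D. (h has_derivative (\<lambda>z. D \<bullet> z)) (at x within S))"

definition Phi :: "('a::finite \<Rightarrow> real \<Rightarrow> real \<Rightarrow> real) \<Rightarrow> (real^'a) set \<Rightarrow> (real^'a) set
                   \<Rightarrow> real^'a \<Rightarrow> real^'a \<Rightarrow> real^'a \<Rightarrow> real" where
  "Phi t V Y y v ybar = fobj t y v - gval t V ybar
       - grad_within (gval t V) Y ybar \<bullet> (y - ybar)"

text \<open>Psi^k(y,v); the norm on pairs of real^'a is the Euclidean norm of the concatenation.\<close>
definition Psi :: "('a::finite \<Rightarrow> real \<Rightarrow> real \<Rightarrow> real) \<Rightarrow> ('a \<Rightarrow> real \<Rightarrow> real) \<Rightarrow> real
                   \<Rightarrow> (real^'a) set \<Rightarrow> (real^'a) set \<Rightarrow> real \<Rightarrow> real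
                   \<Rightarrow> real^'a \<Rightarrow> real^'a \<Rightarrow> real^'a \<Rightarrow> real^'a \<Rightarrow> real" where
  "Psi t G \<eta> V Y \<rho> \<beta> yk vk y v =
     Fobj t G \<eta> y v + \<rho> * Phi t V Y y v yk + \<rho> * \<beta> * (norm (y - yk, v - vk))\<^sup>2"

definition partially_optimal ::
  "('y \<Rightarrow> 'v \<Rightarrow> real) \<Rightarrow> 'y set \<Rightarrow> 'v set \<Rightarrow> 'y \<Rightarrow> 'v \<Rightarrow> bool" where
  "partially_optimal P Ys Vs yb vb \<longleftrightarrow> yb \<in> Ys \<and> vb \<in> Vs \<and>
     (\<forall>v\<in>Vs. P yb vb \<le> P yb v) \<and> (\<forall>y\<in>Ys. P yb vb \<le> P y vb)"

definition accumulation_point :: "(nat \<Rightarrow> 'b::topological_space) \<Rightarrow> 'b \<Rightarrow> bool" where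
  "accumulation_point s p \<longleftrightarrow> (\<exists>r. strict_mono r \<and> (s \<circ> r) \<longlonglongrightarrow> p)"

definition C1_on2 :: "(real \<times> real) set \<Rightarrow> (real \<Rightarrow> real \<Rightarrow> real) \<Rightarrow> bool" where
  "C1_on2 S \<phi> \<longleftrightarrow> (\<exists>Dy Dv. continuous_on S Dy \<and> continuous_on S Dv \<and>
     (\<forall>p\<in>S. ((\<lambda>q. \<phi> (fst q) (snd q)) has_derivative (\<lambda>h. Dy p * fst h + Dv p * snd h))
              (at p within S)))"

definition C1_on :: "real set \<Rightarrow> (real \<Rightarrow> real) \<Rightarrow> bool" where
  "C1_on S \<phi> \<longleftrightarrow> (\<exists>D. continuous_on S D \<and> (\<forall>x\<in>S. (\<phi> has_real_derivative D x) (at x within S)))"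

end

theory Submission
  imports Defs
begin

text \<open>Each half-step of the algorithm minimises \<open>\<Psi>\<^sup>k\<close> in one block of variables, so
  \<open>\<Psi>\<^sup>k\<close> never increases along the iterates, and an iteration that does not decrease it
  strictly leaves the current iterate partially optimal. The feasible set
  \<open>\<Upsilon>\<^sub>\<tau> \<times> \<V>\<close> is compact (the support size is lower semicontinuous, so
  \<open>\<Upsilon>\<^sub>\<tau>\<close> is closed) and \<open>\<Psi>\<^sup>k\<close> is continuous on it. Hence the values are
  bounded below and converge, the iterates have convergent subsequences, and along any such
  subsequence the two inequalities defining the half-steps pass to the limit.\<close>

locale alternating_minimization =
  fixes P :: "'y \<Rightarrow> 'v \<Rightarrow> real" and Y :: "'y set" and V :: "'v set"
    and ys :: "nat \<Rightarrow> 'y" and vs :: "nat \<Rightarrow> 'v"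
  assumes v_step_mem: "vs (Suc j) \<in> V"
    and v_step_min: "v \<in> V \<Longrightarrow> P (ys j) (vs (Suc j)) \<le> P (ys j) v"
    and y_step_mem: "ys (Suc j) \<in> Y"
    and y_step_min: "y \<in> Y \<Longrightarrow> P (ys (Suc j)) (vs (Suc j)) \<le> P y (vs (Suc j))"
begin

lemma y_step_decrease:
    "P (ys (Suc (Suc j))) (vs (Suc (Suc j))) \<le> P (ys (Suc j)) (vs (Suc (Suc j)))"
  and v_step_decrease: "P (ys (Suc j)) (vs (Suc (Suc j))) \<le> P (ys (Suc j)) (vs (Suc j))"
  using y_step_min[OF y_step_mem] v_step_min[OF v_step_mem] .

lemma decseq_value: "decseq (\<lambda>j. P (ys (Suc j)) (vs (Suc j)))"
  unfolding decseq_Suc_iff using y_step_decrease v_step_decrease by (blast intro: order_trans)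

lemma value_Suc_less:
  assumes "\<not> partially_optimal P Y V (ys (Suc j)) (vs (Suc j))"
  shows "P (ys (Suc (Suc j))) (vs (Suc (Suc j))) < P (ys (Suc j)) (vs (Suc j))"
proof (rule ccontr)
  assume "\<not> ?thesis"
  then have "P (ys (Suc j)) (vs (Suc (Suc j))) = P (ys (Suc j)) (vs (Suc j))"
    using y_step_decrease v_step_decrease by (meson antisym not_le order_trans)
  then have "\<forall>v\<in>V. P (ys (Suc j)) (vs (Suc j)) \<le> P (ys (Suc j)) v"
    using v_step_min by metis
  then show False
    using assms y_step_min y_step_mem v_step_mem unfolding partially_optimal_def by blast
qed

end

locale compact_alternating_minimization = alternating_minimization P Y V ys vs
  for P :: "'y::metric_space \<Rightarrow> 'v::metric_space \<Rightarrow> real" and Y V ys vs +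
  assumes compact_Y: "compact Y" and compact_V: "compact V"
    and continuous_P: "continuous_on (Y \<times> V) (\<lambda>(y, v). P y v)"
begin

lemma tendsto_value:
  assumes "f \<longlonglongrightarrow> y" "g \<longlonglongrightarrow> v" "y \<in> Y" "v \<in> V" "\<And>n. f n \<in> Y" "\<And>n. g n \<in> V"
  shows "(\<lambda>n. P (f n) (g n)) \<longlonglongrightarrow> P y v"
  using continuous_on_tendsto_compose[OF continuous_P tendsto_Pair[OF assms(1,2)]] assms(3-)
  by (simp add: always_eventually)

lemma value_convergent: "\<exists>L. (\<lambda>j. P (ys (Suc j)) (vs (Suc j))) \<longlonglongrightarrow> L"
proof -
  have "Y \<times> V \<noteq> {}"
    using y_step_mem v_step_mem by blast
  then obtain m where "\<forall>q\<in>Y \<times> V. (\<lambda>(y, v). P y v) m \<le> (\<lambda>(y, v). P y v) q"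
    using continuous_attains_inf[OF compact_Times[OF compact_Y compact_V] _ continuous_P]
    by blast
  then have "\<forall>j. (\<lambda>(y, v). P y v) m \<le> P (ys (Suc j)) (vs (Suc j))"
    using y_step_mem v_step_mem by fastforce
  then show ?thesis
    using decseq_convergent[OF decseq_value] by metis
qed

lemma accumulation_point_exists: "\<exists>p. accumulation_point (\<lambda>j. (ys (Suc j), vs (Suc j))) p"
proof -
  have "seq_compact (Y \<times> V)"
    by (intro compact_imp_seq_compact compact_Times compact_Y compact_V)
  moreover have "\<forall>j. (ys (Suc j), vs (Suc j)) \<in> Y \<times> V"
    using y_step_mem v_step_mem by blast
  ultimately obtain p r
    where "strict_mono r" "((\<lambda>j. (ys (Suc j), vs (Suc j))) \<circ> r) \<longlonglongrightarrow> p"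
    by (rule seq_compactE)
  then show ?thesis
    unfolding accumulation_point_def by blast
qed

lemma partially_optimal_accumulation_point:
  assumes "accumulation_point (\<lambda>j. (ys (Suc j), vs (Suc j))) p"
  shows "partially_optimal P Y V (fst p) (snd p)"
proof -
  obtain r where r: "strict_mono r"
    and lim: "(\<lambda>n. (ys (Suc (r n)), vs (Suc (r n)))) \<longlonglongrightarrow> p"
    using assms unfolding accumulation_point_def comp_def by blast
  have y_lim: "(\<lambda>n. ys (Suc (r n))) \<longlonglongrightarrow> fst p"
    and v_lim: "(\<lambda>n. vs (Suc (r n))) \<longlonglongrightarrow> snd p"
    using tendsto_fst[OF lim] tendsto_snd[OF lim] by simp_all
  have y_mem: "fst p \<in> Y" and v_mem: "snd p \<in> V"
    using closed_sequentially[OF compact_imp_closed[OF compact_Y] y_step_mem y_lim]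
      closed_sequentially[OF compact_imp_closed[OF compact_V] v_step_mem v_lim] .
  obtain L where L: "(\<lambda>j. P (ys (Suc j)) (vs (Suc j))) \<longlonglongrightarrow> L"
    using value_convergent by blast
  have L_le: "L \<le> P (ys (Suc j)) (vs (Suc j))" for j
    using decseq_ge[OF decseq_value L] by simp
  have "(\<lambda>n. P (ys (Suc (r n))) (vs (Suc (r n)))) \<longlonglongrightarrow> L"
    using LIMSEQ_subseq_LIMSEQ[OF L r] by (simp add: comp_def)
  moreover have "(\<lambda>n. P (ys (Suc (r n))) (vs (Suc (r n)))) \<longlonglongrightarrow> P (fst p) (snd p)"
    by (rule tendsto_value[OF y_lim v_lim y_mem v_mem y_step_mem v_step_mem])
  ultimately have value_p: "P (fst p) (snd p) = L"
    using LIMSEQ_unique by blast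
  have "P (fst p) (snd p) \<le> P y (snd p)" if "y \<in> Y" for y
  proof -
    have "(\<lambda>n. P y (vs (Suc (r n)))) \<longlonglongrightarrow> P y (snd p)"
      using tendsto_value[OF tendsto_const v_lim that v_mem _ v_step_mem] that by blast
    moreover have "\<forall>n. L \<le> P y (vs (Suc (r n)))"
      using L_le y_step_min[OF that] order_trans by blast
    ultimately have "L \<le> P y (snd p)"
      using LIMSEQ_le_const by blast
    then show ?thesis
      using value_p by simp
  qed
  moreover have "P (fst p) (snd p) \<le> P (fst p) v" if "v \<in> V" for v
  proof -
    have "(\<lambda>n. P (ys (Suc (r n))) v) \<longlonglongrightarrow> P (fst p) v"
      using tendsto_value[OF y_lim tendsto_const y_mem that y_step_mem] that by blast
    moreover have "\<forall>n. L \<le> P (ys (Suc (r n))) v"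
      \<comment> \<open>compare with the value after the v-step from \<open>ys (Suc (r n))\<close>\<close>
      using L_le y_step_decrease v_step_min[OF that] by (meson order_trans)
    ultimately have "L \<le> P (fst p) v"
      using LIMSEQ_le_const by blast
    then show ?thesis
      using value_p by simp
  qed
  ultimately show ?thesis
    unfolding partially_optimal_def using y_mem v_mem by simp
qed

end

lemma continuous_on_C1_on2:
  assumes "C1_on2 S \<phi>"
  shows "continuous_on S (\<lambda>q. \<phi> (fst q) (snd q))"
proof -
  obtain Dy Dv where "\<forall>p\<in>S. ((\<lambda>q. \<phi> (fst q) (snd q))
      has_derivative (\<lambda>h. Dy p * fst h + Dv p * snd h)) (at p within S)"
    using assms unfolding C1_on2_def by blast
  then show ?thesis
    by (intro has_derivative_continuous_on) blast
qed

lemma continuous_on_C1_on: "C1_on S \<phi> \<Longrightarrow> continuous_on S \<phi>"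
  unfolding C1_on_def by (blast intro: DERIV_continuous_on)

lemma continuous_on_integral_upper_param:
  fixes f :: "real \<Rightarrow> real \<Rightarrow> real"
  assumes f: "continuous_on {q. 0 \<le> fst q} (\<lambda>q. f (fst q) (snd q))"
  shows "continuous_on ({0..} \<times> {0..B}) (\<lambda>q. integral {0..snd q} (f (fst q)))"
proof -
  have f_comp: "continuous_on S (\<lambda>z. f (g z) (h z))"
    if "continuous_on S g" "continuous_on S h" "\<And>z. z \<in> S \<Longrightarrow> 0 \<le> g z"
    for S :: "'z::topological_space set" and g h
    using continuous_on_compose2[OF f continuous_on_Pair[OF that(1,2)]] that(3)
    by (simp add: image_subset_iff)
  \<comment> \<open>freezing the integrand beyond \<open>x\<close> turns the variable bound into the fixed box \<open>{0..B}\<close>\<close>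
  have split:
    "integral {0..x} (f s) = integral (cbox 0 B) (\<lambda>w. f s (min w x)) - (B - x) * f s x"
    if "0 \<le> s" "0 \<le> x" "x \<le> B" for s x
  proof -
    have "continuous_on {0..B} (\<lambda>w. f s (min w x))"
      by (rule f_comp) (auto intro!: continuous_intros that)
    then have "integral {0..B} (\<lambda>w. f s (min w x))
        = integral {0..x} (\<lambda>w. f s (min w x)) + integral {x..B} (\<lambda>w. f s (min w x))"
      using that integrable_continuous_real
      by (intro Henstock_Kurzweil_Integration.integral_combine[symmetric]) auto
    also have "\<dots> = integral {0..x} (f s) + integral {x..B} (\<lambda>w. f s x)"
      by (intro arg_cong2[where f = "(+)"] integral_cong) auto
    finally show ?thesis
      using that by simp
  qed
  have "continuous_on ({0..} \<times> {0..B})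
      (\<lambda>q. integral (cbox 0 B) (\<lambda>w. f (fst q) (min w (snd q))) - (B - snd q) * f (fst q) (snd q))"
    by (intro continuous_intros integral_continuous_on_param)
      (auto simp: case_prod_unfold intro!: f_comp continuous_intros)
  then show ?thesis
    by (rule continuous_on_eq) (auto simp: split)
qed

lemma continuous_on_Psi:
  fixes t :: "'a::finite \<Rightarrow> real \<Rightarrow> real \<Rightarrow> real" and G :: "'a \<Rightarrow> real \<Rightarrow> real"
  assumes t: "\<And>a. continuous_on {q. 0 \<le> fst q} (\<lambda>q. t a (fst q) (snd q))"
    and G: "\<And>a. continuous_on {0..} (G a)"
    and S: "S \<subseteq> {(y, v). \<forall>a. 0 \<le> y $ a \<and> 0 \<le> v $ a \<and> v $ a \<le> B}"
  shows "continuous_on S (\<lambda>(y, v). Psi t G \<eta> V Y \<rho> \<beta> yk vk y v)"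
proof -
  have coords: "continuous_on S (\<lambda>p. (fst p $ a, snd p $ a))"
    "(\<lambda>p. (fst p $ a, snd p $ a)) ` S \<subseteq> {0..} \<times> {0..B}"
    "continuous_on S (\<lambda>p. fst p $ a)" "(\<lambda>p. fst p $ a) ` S \<subseteq> {0..}" for a
    using S by (auto intro!: continuous_intros)
  have "continuous_on S (\<lambda>p. t a (fst p $ a) (snd p $ a))" for a
    using continuous_on_compose2[OF t coords(1) order_trans[OF coords(2)]] by fastforce
  moreover have "continuous_on S (\<lambda>p. G a (fst p $ a))" for a
    using continuous_on_compose2[OF G coords(3,4)] by simp
  ultimately have Fobj: "continuous_on S (\<lambda>p. Fobj t G \<eta> (fst p) (snd p))"
    unfolding Fobj_def by (intro continuous_intros)
  have "continuous_on S (\<lambda>p. integral {0..snd p $ a} (t a (fst p $ a)))" for a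
    using continuous_on_compose2[OF continuous_on_integral_upper_param[OF t] coords(1,2)] by simp
  then have fobj: "continuous_on S (\<lambda>p. fobj t (fst p) (snd p))"
    unfolding fobj_def by (intro continuous_intros)
  show ?thesis
    unfolding Psi_def Phi_def case_prod_unfold by (intro continuous_intros Fobj fobj)
qed

lemma feasible_flows_nonneg: "v \<in> feasible_flows Delta Lambda d \<Longrightarrow> 0 \<le> v $ a"
  unfolding feasible_flows_def by (auto intro!: sum_nonneg)

lemma compact_feasible_flows:
  fixes Delta :: "'a::finite \<Rightarrow> 'r::finite \<Rightarrow> bool" and Lambda :: "'w::finite \<Rightarrow> 'r \<Rightarrow> bool"
  assumes route_od: "\<And>r. \<exists>w. Lambda w r"
  shows "compact (feasible_flows Delta Lambda d)"
proof -
  define H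
    where "H = {h :: real^'r. (\<forall>r. 0 \<le> h $ r) \<and> (\<forall>w. (\<Sum>r | Lambda w r. h $ r) = d w)}"
  define L :: "real^'r \<Rightarrow> real^'a" where "L = (\<lambda>h. \<chi> a. \<Sum>r | Delta a r. h $ r)"
  have "feasible_flows Delta Lambda d = L ` H"
  proof (intro set_eqI iffI)
    fix v assume "v \<in> feasible_flows Delta Lambda d"
    then obtain h where "\<forall>r. 0 \<le> h r" "\<forall>w. (\<Sum>r | Lambda w r. h r) = d w"
      "v = (\<chi> a. \<Sum>r | Delta a r. h r)"
      unfolding feasible_flows_def by blast
    then show "v \<in> L ` H"
      unfolding H_def L_def by (intro image_eqI[of _ _ "vec_lambda h"]) auto
  next
    fix v assume "v \<in> L ` H"
    then obtain h where "h \<in> H" "v = L h"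
      by blast
    then show "v \<in> feasible_flows Delta Lambda d"
      unfolding feasible_flows_def H_def L_def by (intro CollectI exI[of _ "vec_nth h"]) auto
  qed
  moreover have "closed H"
    unfolding H_def by (intro closed_Collect_conj closed_Collect_all closed_Collect_le
        closed_Collect_eq continuous_intros)
  moreover have "H \<subseteq> cbox 0 (\<chi> r. \<Sum>w\<in>UNIV. \<bar>d w\<bar>)"
  proof
    fix h assume h: "h \<in> H"
    have "h $ r \<le> (\<Sum>w\<in>UNIV. \<bar>d w\<bar>)" for r
    proof -
      obtain w where "Lambda w r"
        using route_od by blast
      then have "h $ r \<le> (\<Sum>r' | Lambda w r'. h $ r')"
        using h by (intro member_le_sum) (auto simp: H_def)
      also have "\<dots> = d w"
        using h by (simp add: H_def)
      also have "\<dots> \<le> (\<Sum>w\<in>UNIV. \<bar>d w\<bar>)"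
        by (rule order_trans[OF abs_ge_self]) (rule member_le_sum, auto)
      finally show ?thesis .
    qed
    then show "h \<in> cbox 0 (\<chi> r. \<Sum>w\<in>UNIV. \<bar>d w\<bar>)"
      using h by (simp add: H_def mem_box_cart)
  qed
  moreover have "continuous_on H L"
    unfolding L_def by (intro continuous_intros)
  ultimately show ?thesis
    by (metis bounded_cbox bounded_subset compact_continuous_image compact_eq_bounded_closed)
qed

lemma eventually_support_subset:
  fixes f :: "'b \<Rightarrow> real^'a::finite"
  assumes "(f \<longlongrightarrow> l) F"
  shows "eventually (\<lambda>x. {a. 0 < l $ a} \<subseteq> {a. 0 < f x $ a}) F"
proof -
  have "eventually (\<lambda>x. 0 < l $ a \<longrightarrow> 0 < f x $ a) F" for a
    using order_tendstoD(1)[OF tendsto_vec_nth[OF assms, of a]]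
    by (cases "0 < l $ a") (auto elim: eventually_mono)
  then have "eventually (\<lambda>x. \<forall>a. 0 < l $ a \<longrightarrow> 0 < f x $ a) F"
    by (rule eventually_all_finite)
  then show ?thesis
    by (rule eventually_mono) auto
qed

lemma closed_Upsilon: "closed (Upsilon u \<tau>)"
  unfolding closed_sequential_limits
proof (intro allI impI, elim conjE)
  fix f l assume f: "\<forall>n. f n \<in> Upsilon u \<tau>" and lim: "f \<longlonglongrightarrow> l"
  have "closed (Ybox u)"
    unfolding Ybox_def
    by (intro closed_Collect_all closed_Collect_conj closed_Collect_le continuous_intros)
  then have l_Ybox: "l \<in> Ybox u"
    by (rule closed_sequentially[OF _ _ lim]) (use f in \<open>simp add: Upsilon_def\<close>)
  obtain N where "\<forall>n\<ge>N. {a. 0 < l $ a} \<subseteq> {a. 0 < f n $ a}"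
    using eventually_support_subset[OF lim] unfolding eventually_sequentially by blast
  then have "card {a. 0 < l $ a} \<le> card {a. 0 < f N $ a}"
    by (intro card_mono) auto
  also have "\<dots> \<le> \<tau>"
    using f by (simp add: Upsilon_def)
  finally show "l \<in> Upsilon u \<tau>"
    using l_Ybox by (simp add: Upsilon_def)
qed

lemma compact_Upsilon: "compact (Upsilon u \<tau>)"
proof -
  have "Upsilon u \<tau> \<subseteq> cbox 0 (\<chi> a. u a)"
    by (auto simp: Upsilon_def Ybox_def mem_box_cart)
  then show ?thesis
    using closed_Upsilon bounded_subset[OF bounded_cbox] compact_eq_bounded_closed by blast
qed

theorem theorem4p1:
  fixes Delta :: "'a::finite \<Rightarrow> 'r::finite \<Rightarrow> bool"
    and Lambda :: "'w::finite \<Rightarrow> 'r \<Rightarrow> bool"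
    and d :: "'w \<Rightarrow> real"
    and u :: "'a \<Rightarrow> real" and \<tau> :: nat
    and t :: "'a \<Rightarrow> real \<Rightarrow> real \<Rightarrow> real" and G :: "'a \<Rightarrow> real \<Rightarrow> real"
    and \<eta> \<rho> \<beta> :: real
    and yk vk y0 :: "real^'a"
    and ys vs :: "nat \<Rightarrow> real^'a"
  assumes route_od: "\<forall>r. \<exists>!w. Lambda w r"
    and od_route: "\<forall>w. \<exists>r. Lambda w r"
    and d_pos: "\<forall>w. d w > 0"
    and u_nonneg: "\<forall>a. u a \<ge> 0"
    and tau: "1 \<le> \<tau>" "\<tau> \<le> CARD('a)"
    and t_C1: "\<forall>a. C1_on2 {p. fst p \<ge> 0} (t a)"
    and t_mono: "\<forall>a. \<forall>yy\<ge>0. strict_mono (t a yy)"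
    and G_nonneg: "\<forall>a. \<forall>yy\<ge>0. G a yy \<ge> 0"
    and G_C1: "\<forall>a. C1_on {0..} (G a)"
    and G_mono: "\<forall>a. strict_mono_on {0..} (G a)"
    and G_convex: "\<forall>a. convex_on {0..} (G a)"
    and int_convex: "\<forall>a. convex_on {p. fst p \<ge> 0 \<and> snd p \<ge> 0}
                           (\<lambda>p. integral {0 .. snd p} (\<lambda>w. t a (fst p) w))"
    and tv_convex: "\<forall>a. convex_on {p. fst p \<ge> 0 \<and> snd p \<ge> 0} (\<lambda>p. t a (fst p) (snd p) * snd p)"
    and eta: "\<eta> > 0" and rho: "\<rho> > 0" and beta: "\<beta> > 0"
    and yk: "yk \<in> Upsilon u \<tau>" and vk: "vk \<in> feasible_flows Delta Lambda d"
    and init: "ys 0 = y0" "y0 \<in> Upsilon u \<tau>"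
    and step_v: "\<forall>j. vs (Suc j) \<in> feasible_flows Delta Lambda d \<and>
        (\<forall>v\<in>feasible_flows Delta Lambda d.
           Psi t G \<eta> (feasible_flows Delta Lambda d) (Ybox u) \<rho> \<beta> yk vk (ys j) (vs (Suc j))
           \<le> Psi t G \<eta> (feasible_flows Delta Lambda d) (Ybox u) \<rho> \<beta> yk vk (ys j) v)"
    and step_y: "\<forall>j. ys (Suc j) \<in> Upsilon u \<tau> \<and>
        (\<forall>y\<in>Upsilon u \<tau>.
           Psi t G \<eta> (feasible_flows Delta Lambda d) (Ybox u) \<rho> \<beta> yk vk (ys (Suc j)) (vs (Suc j))
           \<le> Psi t G \<eta> (feasible_flows Delta Lambda d) (Ybox u) \<rho> \<beta> yk vk y (vs (Suc j)))"
    and no_stop: "\<forall>j\<ge>1. \<not> partially_optimal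
        (Psi t G \<eta> (feasible_flows Delta Lambda d) (Ybox u) \<rho> \<beta> yk vk)
        (Upsilon u \<tau>) (feasible_flows Delta Lambda d) (ys j) (vs j)"
  shows "(\<forall>j\<ge>1. Psi t G \<eta> (feasible_flows Delta Lambda d) (Ybox u) \<rho> \<beta> yk vk (ys (Suc j)) (vs (Suc j))
                < Psi t G \<eta> (feasible_flows Delta Lambda d) (Ybox u) \<rho> \<beta> yk vk (ys j) (vs j))
       \<and> (\<exists>L::real. (\<lambda>j. Psi t G \<eta> (feasible_flows Delta Lambda d) (Ybox u) \<rho> \<beta> yk vk
                          (ys (Suc j)) (vs (Suc j))) \<longlonglongrightarrow> L)
       \<and> (\<exists>p. accumulation_point (\<lambda>j. (ys (Suc j), vs (Suc j))) p)
       \<and> (\<forall>p. accumulation_point (\<lambda>j. (ys (Suc j), vs (Suc j))) p \<longrightarrow>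
            partially_optimal (Psi t G \<eta> (feasible_flows Delta Lambda d) (Ybox u) \<rho> \<beta> yk vk)
              (Upsilon u \<tau>) (feasible_flows Delta Lambda d) (fst p) (snd p))"
proof -
  let ?V = "feasible_flows Delta Lambda d" and ?Y = "Upsilon u \<tau>"
  let ?P = "Psi t G \<eta> ?V (Ybox u) \<rho> \<beta> yk vk"
  have compact_V: "compact ?V"
    using route_od by (intro compact_feasible_flows) blast
  then obtain B where B: "\<forall>v\<in>?V. norm v \<le> B"
    using compact_imp_bounded bounded_iff by metis
  have "?Y \<times> ?V \<subseteq> {(y, v). \<forall>a. 0 \<le> y $ a \<and> 0 \<le> v $ a \<and> v $ a \<le> B}"
    using B by (auto simp: Upsilon_def Ybox_def feasible_flows_nonneg
        intro: order_trans[OF abs_ge_self order_trans[OF component_le_norm_cart]])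
  then have "continuous_on (?Y \<times> ?V) (\<lambda>(y, v). ?P y v)"
    using t_C1 G_C1 by (intro continuous_on_Psi continuous_on_C1_on2 continuous_on_C1_on) auto
  then interpret compact_alternating_minimization ?P ?Y ?V ys vs
    using step_v step_y compact_V compact_Upsilon by unfold_locales auto
  have "?P (ys (Suc j)) (vs (Suc j)) < ?P (ys j) (vs j)" if "j \<ge> 1" for j
  proof -
    obtain i where "j = Suc i"
      using \<open>j \<ge> 1\<close> by (cases j) auto
    then show ?thesis
      using value_Suc_less no_stop \<open>j \<ge> 1\<close> by blast
  qed
  then show ?thesis
    using value_convergent accumulation_point_exists partially_optimal_accumulation_point by blast
qed

end
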